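(* Assume $k\ge 2$. Let $A:V\to V$ be an isomorphism of the model $\mathcal V$, i.e. a linear bijection with $(Ax,Ay)=(x,y)$ and $R(Ax,Ay,Az,Aw)=R(x,y,z,w)$ for all $x,y,z,w\in V$. Then there exist a permutation $\sigma$ of $\{1,\dots,k\}$ and real constants $a_0$ and $b_1,\dots,b_k$ with $|a_0|\,b_i^2=1$ for all $i$, such that for $1\le i\le k$: $AU_0=a_0U_0+\Xi_0$ with $\Xi_0\in A_V$; $AU_i=b_iU_{\sigma(i)}+\Xi_i$ with $\Xi_i\in A_{S,V}$; and $AS_i=\operatorname{sign}(a_0)S_{\sigma(i)}+\bar\Xi_i$ with $\bar\Xi_i\in A_V$.
   Context: Fix integers $k\ge1$ and signs $\varepsilon_1,\dots,\varepsilon_k\in\{\pm1\}$. Let $V=\mathbb R^{3k+2}$ with basis $\{U_0,\dots,U_k,V_0,\dots,V_k,S_1,\dots,S_k\}$, let $(\cdot,\cdot)$ be the symmetric inner product whose only nonzero values on pairs of basis vectors are $(U_i,V_i)=(V_i,U_i)=1$ for $0\le i\le k$ and $(S_i,S_i)=\varepsilon_i$ for $1\le i\le k$, and let $R$ be the algebraic curvature tensor on $V$ (a 4-linear form with $R(x,y,z,w)=-R(y,x,z,w)=R(z,w,x,y)$ and $R(x,y,z,w)+R(y,z,x,w)+R(z,x,y,w)=0$) whose only nonzero values on 4-tuples of basis vectors are those obtained from $R(U_0,U_i,U_i,S_i)=1$ ($1\le i\le k$) by these symmetries. Set $\mathcal V=(V,(\cdot,\cdot),R)$. Define $A_V=\{\xi\in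 V: R(\xi,y,z,w)=0\ \forall y,z,w\}=\ker R$ (which equals $\mathrm{Span}\{V_0,\dots,V_k\}$) and $A_{S,V}=A_V^{\perp}$ (which equals $\mathrm{Span}\{S_1,\dots,S_k,V_0,\dots,V_k\}$). *)

theory Defs
  imports Complex_Main
begin

datatype bidx = BU nat | BV nat | BS nat

type_synonym vec = "bidx \<Rightarrow> real"

definition basis_idx :: "nat \<Rightarrow> bidx set" where
  "basis_idx k = {BU i | i. i \<le> k} \<union> {BV i | i. i \<le> k} \<union> {BS i | i. 1 \<le> i \<and> i \<le> k}"

definition Vsp :: "nat \<Rightarrow> vec set" where
  "Vsp k = {x. \<forall>b. b \<notin> basis_idx k \<longrightarrow> x b = 0}"

definition ebas :: "bidx \<Rightarrow> vec" where
  "ebas c = (\<lambda>b. if b = c then 1 else 0)"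

definition ip :: "nat \<Rightarrow> (nat \<Rightarrow> real) \<Rightarrow> vec \<Rightarrow> vec \<Rightarrow> real" where
  "ip k eps x y = (\<Sum>i\<le>k. x (BU i) * y (BV i) + x (BV i) * y (BU i))
                 + (\<Sum>i\<in>{1..k}. eps i * x (BS i) * y (BS i))"

text \<open>The algebraic curvature tensor generated by R(a,b,b,c)=1 with all its symmetric images.\<close>
definition Tabc :: "bidx \<Rightarrow> bidx \<Rightarrow> bidx \<Rightarrow> vec \<Rightarrow> vec \<Rightarrow> vec \<Rightarrow> vec \<Rightarrow> real" where
  "Tabc a b c x y z w =
      x a * y b * z b * w c - x b * y a * z b * w c
    - x a * y b * z c * w b + x b * y a * z c * w b
    + x b * y c * z a * w b - x c * y b * z a * w b
    - x b * y c * z b * w a + x c * y b * z b * w a"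

definition Rt :: "nat \<Rightarrow> vec \<Rightarrow> vec \<Rightarrow> vec \<Rightarrow> vec \<Rightarrow> real" where
  "Rt k x y z w = (\<Sum>i\<in>{1..k}. Tabc (BU 0) (BU i) (BS i) x y z w)"

definition AV :: "nat \<Rightarrow> vec set" where
  "AV k = {\<xi> \<in> Vsp k. \<forall>y\<in>Vsp k. \<forall>z\<in>Vsp k. \<forall>w\<in>Vsp k. Rt k \<xi> y z w = 0}"

definition ASV :: "nat \<Rightarrow> (nat \<Rightarrow> real) \<Rightarrow> vec set" where
  "ASV k eps = {x \<in> Vsp k. \<forall>\<xi>\<in>AV k. ip k eps x \<xi> = 0}"

definition model_iso :: "nat \<Rightarrow> (nat \<Rightarrow> real) \<Rightarrow> (vec \<Rightarrow> vec) \<Rightarrow> bool" where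
  "model_iso k eps A \<longleftrightarrow>
     bij_betw A (Vsp k) (Vsp k)
   \<and> (\<forall>x\<in>Vsp k. \<forall>y\<in>Vsp k. A (\<lambda>b. x b + y b) = (\<lambda>b. A x b + A y b))
   \<and> (\<forall>c. \<forall>x\<in>Vsp k. A (\<lambda>b. c * x b) = (\<lambda>b. c * A x b))
   \<and> (\<forall>x\<in>Vsp k. \<forall>y\<in>Vsp k. ip k eps (A x) (A y) = ip k eps x y)
   \<and> (\<forall>x\<in>Vsp k. \<forall>y\<in>Vsp k. \<forall>z\<in>Vsp k. \<forall>w\<in>Vsp k.
        Rt k (A x) (A y) (A z) (A w) = Rt k x y z w)"

end

theory Submission
  imports Defs
begin

text \<open>An isomorphism \<open>A\<close> preserves \<open>ker R = span {V\<^sub>i}\<close> and its orthogonal complement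
  \<open>span {S\<^sub>i, V\<^sub>i}\<close>. Pick \<open>Spre i\<close> in that complement with \<open>A (Spre i) = S\<^sub>i\<close>; since \<open>R(x,y,z,w)\<close> only
  sees the \<open>S\<close>-coordinates of such a \<open>w\<close>, the identity \<open>R(Ax,Ay,Az,S\<^sub>i) = R(x,y,z,Spre i)\<close>
  evaluated on \<open>U\<^sub>r, U\<^sub>s, U\<^sub>t\<close> yields polynomial relations between the \<open>U\<close>-coordinates of the
  \<open>A U\<^sub>r\<close> and the \<open>S\<close>-coordinates of \<open>Spre i\<close>. They force \<open>Spre i\<close> to have a single nonzero
  \<open>S\<close>-coordinate, at \<open>\<tau> i\<close> say, equal to \<open>a\<^sub>0 b\<^sub>i\<^sup>2\<close>, where \<open>a\<^sub>0\<close> is the \<open>U\<^sub>0\<close>-coordinate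
  of \<open>A U\<^sub>0\<close> and \<open>b\<^sub>i\<close> the \<open>U\<^sub>i\<close>-coordinate of \<open>A U\<^sub>\<tau>\<^sub>i\<close>, the only nonzero entry of that row.
  If \<open>\<tau>\<close> missed some \<open>t\<close>, then \<open>A U\<^sub>t\<close> and hence \<open>U\<^sub>t\<close> would be orthogonal to \<open>ker R\<close>;
  so \<open>\<tau>\<close> is a permutation, and \<open>\<sigma> = \<tau>\<inverse>\<close>. Comparing \<open>(S\<^sub>i,S\<^sub>i) = (Spre i, Spre i)\<close> gives
  \<open>\<epsilon>\<^sub>i = \<epsilon>\<^sub>\<tau>\<^sub>i (a\<^sub>0 b\<^sub>i\<^sup>2)\<^sup>2\<close>, whence \<open>a\<^sub>0 b\<^sub>i\<^sup>2 = sgn a\<^sub>0\<close>. Finally \<open>R(AU\<^sub>0,AU\<^sub>m,AU\<^sub>m,AU\<^sub>0) = 0\<close>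
  kills the \<open>S\<close>-coordinates of \<open>A U\<^sub>0\<close>; \<open>k \<ge> 2\<close> is needed to see that the \<open>U\<^sub>0\<close>-coordinate of
  \<open>A U\<^sub>r\<close> vanishes for \<open>r \<ge> 1\<close>.\<close>

lemma mem_basis_idx [simp]:
  "BU i \<in> basis_idx k \<longleftrightarrow> i \<le> k"
  "BV i \<in> basis_idx k \<longleftrightarrow> i \<le> k"
  "BS i \<in> basis_idx k \<longleftrightarrow> 1 \<le> i \<and> i \<le> k"
  unfolding basis_idx_def by auto

lemma ebas_apply [simp]:
  "ebas c (BU j) = (if c = BU j then 1 else 0)"
  "ebas c (BV j) = (if c = BV j then 1 else 0)"
  "ebas c (BS j) = (if c = BS j then 1 else 0)"
  by (auto simp: ebas_def)

lemma ebas_in_Vsp: "c \<in> basis_idx k \<Longrightarrow> ebas c \<in> Vsp k"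
  unfolding Vsp_def ebas_def by auto

lemma Vsp_diff: "x \<in> Vsp k \<Longrightarrow> y \<in> Vsp k \<Longrightarrow> (\<lambda>b. x b - c * y b) \<in> Vsp k"
  unfolding Vsp_def by auto

lemma bex_offset:
  fixes f g :: "'a \<Rightarrow> 'b::ab_group_add"
  shows "(\<lambda>b. f b - g b) \<in> S \<Longrightarrow> \<exists>\<xi>\<in>S. f = (\<lambda>b. g b + \<xi> b)"
  by (rule bexI[of _ "\<lambda>b. f b - g b"]) auto

lemma sum_eq_single:
  "finite S \<Longrightarrow> m \<in> S \<Longrightarrow> (\<And>i. i \<in> S \<Longrightarrow> i \<noteq> m \<Longrightarrow> f i = 0) \<Longrightarrow> sum f S = f m"
  by (simp add: sum.remove)

lemma Rt_expand: "Rt k x y z w = (\<Sum>i\<in>{1..k}.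
    (x (BU 0) * y (BU i) - x (BU i) * y (BU 0)) * (z (BU i) * w (BS i) - z (BS i) * w (BU i))
  + (x (BU i) * y (BS i) - x (BS i) * y (BU i)) * (z (BU 0) * w (BU i) - z (BU i) * w (BU 0)))"
  unfolding Rt_def Tabc_def by (rule sum.cong) (auto simp: algebra_simps)

lemma Rt_U_free_last:
  assumes "\<forall>i\<le>k. w (BU i) = 0"
  shows "Rt k x y z w = (\<Sum>i\<in>{1..k}. (x (BU 0) * y (BU i) - x (BU i) * y (BU 0)) * z (BU i) * w (BS i))"
  unfolding Rt_expand using assms by (intro sum.cong) auto

lemma Rt_xyyx:
  assumes "\<forall>i\<in>{1..k}. x (BU i) = 0" and "y (BU 0) = 0"
  shows "Rt k x y y x = 2 * x (BU 0) * (\<Sum>i\<in>{1..k}. (y (BU i))\<^sup>2 * x (BS i))"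
  unfolding Rt_expand sum_distrib_left using assms
  by (intro sum.cong) (auto simp: power2_eq_square algebra_simps)

lemma AV_eq:
  assumes "1 \<le> k"
  shows "AV k = {\<xi> \<in> Vsp k. (\<forall>i\<le>k. \<xi> (BU i) = 0) \<and> (\<forall>i\<in>{1..k}. \<xi> (BS i) = 0)}"
proof (intro equalityI subsetI CollectI conjI allI ballI impI)
  fix \<xi> assume \<xi>: "\<xi> \<in> AV k"
  then show "\<xi> \<in> Vsp k" unfolding AV_def by auto
  have R0: "Rt k \<xi> (ebas y) (ebas z) (ebas w) = 0"
    if "y \<in> basis_idx k" "z \<in> basis_idx k" "w \<in> basis_idx k" for y z w
    using \<xi> that ebas_in_Vsp unfolding AV_def by auto
  fix i
  assume i: "i \<le> k"
  show "\<xi> (BU i) = 0"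
  proof (cases "i = 0")
    case True
    have "Rt k \<xi> (ebas (BU 1)) (ebas (BU 1)) (ebas (BS 1)) = \<xi> (BU 0)"
      using assms by (subst Rt_U_free_last) (auto simp: sum_eq_single[where m=1])
    with R0 assms True show ?thesis by simp
  next
    case False
    have "Rt k \<xi> (ebas (BU 0)) (ebas (BU i)) (ebas (BS i)) = - \<xi> (BU i)"
      using i False by (subst Rt_U_free_last) (auto simp: sum_eq_single[where m=i])
    with R0 i False show ?thesis by simp
  qed
next
  fix \<xi> i assume \<xi>: "\<xi> \<in> AV k" and i: "i \<in> {1..k}"
  have "Rt k \<xi> (ebas (BU i)) (ebas (BU 0)) (ebas (BU i)) = - \<xi> (BS i)"
    unfolding Rt_expand using i by (auto simp: sum_eq_single[where m=i])
  moreover have "Rt k \<xi> (ebas (BU i)) (ebas (BU 0)) (ebas (BU i)) = 0"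
    using \<xi> i ebas_in_Vsp unfolding AV_def by auto
  ultimately show "\<xi> (BS i) = 0" by simp
next
  fix \<xi> assume "\<xi> \<in> {\<xi> \<in> Vsp k. (\<forall>i\<le>k. \<xi> (BU i) = 0) \<and> (\<forall>i\<in>{1..k}. \<xi> (BS i) = 0)}"
  then show "\<xi> \<in> AV k" unfolding AV_def Rt_expand by auto
qed

lemma AV_scale: "1 \<le> k \<Longrightarrow> \<xi> \<in> AV k \<Longrightarrow> (\<lambda>b. c * \<xi> b) \<in> AV k"
  by (simp add: AV_eq Vsp_def)

lemma ip_U_free:
  assumes "\<forall>i\<le>k. x (BU i) = 0" and "\<forall>i\<le>k. y (BU i) = 0"
  shows "ip k eps x y = (\<Sum>i\<in>{1..k}. eps i * x (BS i) * y (BS i))"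
  unfolding ip_def using assms by simp

lemma ASV_eq:
  assumes "1 \<le> k"
  shows "ASV k eps = {x \<in> Vsp k. \<forall>i\<le>k. x (BU i) = 0}"
proof (intro equalityI subsetI CollectI conjI allI impI)
  fix x i assume x: "x \<in> ASV k eps" and i: "i \<le> k"
  have "ebas (BV i) \<in> AV k" using assms i by (simp add: AV_eq[OF assms] ebas_in_Vsp)
  then have "ip k eps x (ebas (BV i)) = 0" using x unfolding ASV_def by auto
  moreover have "ip k eps x (ebas (BV i)) = x (BU i)"
    unfolding ip_def using i by (simp add: sum_eq_single[where m=i])
  ultimately show "x (BU i) = 0" by simp
qed (auto simp: ASV_def AV_eq[OF assms] ip_def)

locale model_isomorphism =
  fixes k :: nat and eps :: "nat \<Rightarrow> real" and A :: "vec \<Rightarrow> vec"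
  assumes k_pos: "1 \<le> k" and iso: "model_iso k eps A"
begin

lemma A_Vsp: "x \<in> Vsp k \<Longrightarrow> A x \<in> Vsp k"
  using iso unfolding model_iso_def bij_betw_def by auto

lemma A_onto: "y \<in> Vsp k \<Longrightarrow> \<exists>x\<in>Vsp k. A x = y"
  using iso unfolding model_iso_def bij_betw_def by (metis imageE)

lemma A_ip: "x \<in> Vsp k \<Longrightarrow> y \<in> Vsp k \<Longrightarrow> ip k eps (A x) (A y) = ip k eps x y"
  using iso unfolding model_iso_def by auto

lemma A_Rt: "x \<in> Vsp k \<Longrightarrow> y \<in> Vsp k \<Longrightarrow> z \<in> Vsp k \<Longrightarrow> w \<in> Vsp k \<Longrightarrow>
    Rt k (A x) (A y) (A z) (A w) = Rt k x y z w"
  using iso unfolding model_iso_def by auto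

lemma A_diff:
  assumes "x \<in> Vsp k" "y \<in> Vsp k"
  shows "A (\<lambda>b. x b - c * y b) = (\<lambda>b. A x b - c * A y b)"
proof -
  have add: "\<forall>x\<in>Vsp k. \<forall>y\<in>Vsp k. A (\<lambda>b. x b + y b) = (\<lambda>b. A x b + A y b)"
    and scale: "\<forall>c. \<forall>x\<in>Vsp k. A (\<lambda>b. c * x b) = (\<lambda>b. c * A x b)"
    using iso unfolding model_iso_def by auto
  have "(\<lambda>b. - c * y b) \<in> Vsp k" using assms(2) unfolding Vsp_def by auto
  from add[rule_format, OF assms(1) this] scale[rule_format, OF assms(2), of "- c"]
  show ?thesis by simp
qed

lemma A_AV:
  assumes "x \<in> AV k"
  shows "A x \<in> AV k"
  unfolding AV_def
proof (intro CollectI conjI ballI)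
  have x: "x \<in> Vsp k" using assms unfolding AV_def by auto
  then show "A x \<in> Vsp k" by (rule A_Vsp)
  fix y z w assume "y \<in> Vsp k" "z \<in> Vsp k" "w \<in> Vsp k"
  then obtain y' z' w' where "y' \<in> Vsp k" "z' \<in> Vsp k" "w' \<in> Vsp k"
    and "y = A y'" "z = A z'" "w = A w'"
    using A_onto by metis
  then show "Rt k (A x) y z w = 0" using A_Rt[OF x] assms unfolding AV_def by auto
qed

lemma ASV_of_A_ASV:
  assumes "x \<in> Vsp k" and "A x \<in> ASV k eps"
  shows "x \<in> ASV k eps"
  unfolding ASV_def
proof (intro CollectI conjI ballI)
  fix \<xi> assume \<xi>: "\<xi> \<in> AV k"
  then have "\<xi> \<in> Vsp k" unfolding AV_def by auto
  then have "ip k eps x \<xi> = ip k eps (A x) (A \<xi>)" using A_ip[OF assms(1)] by simp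
  also have "\<dots> = 0" using assms(2) A_AV[OF \<xi>] unfolding ASV_def by auto
  finally show "ip k eps x \<xi> = 0" .
qed (fact assms(1))

definition Ublock :: "nat \<Rightarrow> nat \<Rightarrow> real" where
  "Ublock i r = A (ebas (BU r)) (BU i)"

definition Spre :: "nat \<Rightarrow> vec" where
  "Spre i = inv_into (Vsp k) A (ebas (BS i))"

lemma
  assumes "i \<in> {1..k}"
  shows Spre_in_Vsp: "Spre i \<in> Vsp k" and A_Spre: "A (Spre i) = ebas (BS i)"
    and Spre_U_coord: "\<forall>j\<le>k. Spre i (BU j) = 0"
proof -
  have S: "ebas (BS i) \<in> A ` Vsp k"
    using iso assms ebas_in_Vsp unfolding model_iso_def bij_betw_def by auto
  show in_Vsp: "Spre i \<in> Vsp k" unfolding Spre_def using inv_into_into[OF S] .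
  show A_pre: "A (Spre i) = ebas (BS i)" unfolding Spre_def using f_inv_into_f[OF S] .
  have "A (Spre i) \<in> ASV k eps" using assms ebas_in_Vsp by (simp add: A_pre ASV_eq[OF k_pos])
  with in_Vsp show "\<forall>j\<le>k. Spre i (BU j) = 0" using ASV_of_A_ASV ASV_eq[OF k_pos] by blast
qed

lemma curvature_transfer:
  assumes "x \<in> Vsp k" "y \<in> Vsp k" "z \<in> Vsp k" "i \<in> {1..k}"
  shows "(A x (BU 0) * A y (BU i) - A x (BU i) * A y (BU 0)) * A z (BU i)
       = (\<Sum>m\<in>{1..k}. (x (BU 0) * y (BU m) - x (BU m) * y (BU 0)) * z (BU m) * Spre i (BS m))"
proof -
  have "(A x (BU 0) * A y (BU i) - A x (BU i) * A y (BU 0)) * A z (BU i)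
      = Rt k (A x) (A y) (A z) (ebas (BS i))"
    using assms(4) by (subst Rt_U_free_last) (auto simp: sum_eq_single[where m=i])
  also have "\<dots> = Rt k x y z (Spre i)"
    using A_Rt[OF assms(1-3) Spre_in_Vsp[OF assms(4)]] A_Spre[OF assms(4)] by simp
  also have "\<dots> = (\<Sum>m\<in>{1..k}. (x (BU 0) * y (BU m) - x (BU m) * y (BU 0)) * z (BU m) * Spre i (BS m))"
    using Spre_U_coord[OF assms(4)] by (rule Rt_U_free_last)
  finally show ?thesis .
qed

lemma Ublock_relation_U0:
  assumes "i \<in> {1..k}" "s \<in> {1..k}" "t \<le> k"
  shows "(Ublock 0 0 * Ublock i s - Ublock i 0 * Ublock 0 s) * Ublock i t
       = (if t = s then Spre i (BS s) else 0)"
proof -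
  have "(\<Sum>m\<in>{1..k}. (ebas (BU 0) (BU 0) * ebas (BU s) (BU m) - ebas (BU 0) (BU m) * ebas (BU s) (BU 0))
          * ebas (BU t) (BU m) * Spre i (BS m)) = (if t = s then Spre i (BS s) else 0)"
    using assms by (subst sum_eq_single[where m=s]) auto
  then show ?thesis
    using curvature_transfer[of "ebas (BU 0)" "ebas (BU s)" "ebas (BU t)" i] assms
    by (simp add: Ublock_def ebas_in_Vsp del: ebas_apply)
qed

lemma Ublock_relation:
  assumes "i \<in> {1..k}" "r \<in> {1..k}" "s \<in> {1..k}" "t \<le> k"
  shows "(Ublock 0 r * Ublock i s - Ublock i r * Ublock 0 s) * Ublock i t = 0"
proof -
  have "(\<Sum>m\<in>{1..k}. (ebas (BU r) (BU 0) * ebas (BU s) (BU m) - ebas (BU r) (BU m) * ebas (BU s) (BU 0))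
          * ebas (BU t) (BU m) * Spre i (BS m)) = 0"
    using assms by (intro sum.neutral) auto
  then show ?thesis
    using curvature_transfer[of "ebas (BU r)" "ebas (BU s)" "ebas (BU t)" i] assms
    by (simp add: Ublock_def ebas_in_Vsp del: ebas_apply)
qed

lemma Spre_S_coord_exists:
  assumes "i \<in> {1..k}"
  shows "\<exists>m\<in>{1..k}. Spre i (BS m) \<noteq> 0"
proof (rule ccontr)
  assume "\<not> ?thesis"
  then have "Spre i \<in> AV k" using Spre_in_Vsp[OF assms] Spre_U_coord[OF assms] by (auto simp: AV_eq[OF k_pos])
  then have "ebas (BS i) \<in> AV k" using A_AV A_Spre[OF assms] by metis
  then have "\<forall>j\<in>{1..k}. ebas (BS i) (BS j) = 0" by (simp add: AV_eq[OF k_pos])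
  then have "ebas (BS i) (BS i) = 0" using assms by blast
  then show False by simp
qed

definition tau :: "nat \<Rightarrow> nat" where
  "tau i = (SOME m. m \<in> {1..k} \<and> Spre i (BS m) \<noteq> 0)"

lemma
  assumes "i \<in> {1..k}"
  shows tau_in_range: "tau i \<in> {1..k}" and Spre_tau_nonzero: "Spre i (BS (tau i)) \<noteq> 0"
  using someI_ex[OF Spre_S_coord_exists[OF assms, unfolded Bex_def]] unfolding tau_def by auto

lemma Ublock_tau_nonzero: "i \<in> {1..k} \<Longrightarrow> Ublock i (tau i) \<noteq> 0"
  using Ublock_relation_U0[of i "tau i" "tau i"] tau_in_range Spre_tau_nonzero by auto

lemma Ublock_off_tau:
  assumes "i \<in> {1..k}" "t \<le> k" "t \<noteq> tau i"
  shows "Ublock i t = 0"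
proof -
  let ?d = "Ublock 0 0 * Ublock i (tau i) - Ublock i 0 * Ublock 0 (tau i)"
  have m: "tau i \<in> {1..k}" by (rule tau_in_range[OF assms(1)])
  have "?d * Ublock i (tau i) = Spre i (BS (tau i))"
    using Ublock_relation_U0[OF assms(1) m] m by simp
  then have "?d \<noteq> 0" using Spre_tau_nonzero[OF assms(1)] by auto
  moreover have "?d * Ublock i t = 0"
    using Ublock_relation_U0[OF assms(1) m assms(2)] assms(3) by simp
  ultimately show ?thesis by simp
qed

lemma Spre_off_tau: "i \<in> {1..k} \<Longrightarrow> m \<in> {1..k} \<Longrightarrow> m \<noteq> tau i \<Longrightarrow> Spre i (BS m) = 0"
  using Ublock_relation_U0[of i m m] Ublock_off_tau[of i m] by auto

lemma Spre_tau: "i \<in> {1..k} \<Longrightarrow> Spre i (BS (tau i)) = Ublock 0 0 * (Ublock i (tau i))\<^sup>2"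
  using Ublock_relation_U0[of i "tau i" "tau i"] Ublock_off_tau[of i 0] tau_in_range[of i]
  by (auto simp: power2_eq_square)

lemma Ublock_0_off_tau:
  assumes "i \<in> {1..k}" "r \<in> {1..k}" "r \<noteq> tau i"
  shows "Ublock 0 r = 0"
proof -
  have m: "tau i \<in> {1..k}" by (rule tau_in_range[OF assms(1)])
  have "(Ublock 0 r * Ublock i (tau i) - Ublock i r * Ublock 0 (tau i)) * Ublock i (tau i) = 0"
    using Ublock_relation[OF assms(1,2) m] m by simp
  moreover have "Ublock i r = 0" using Ublock_off_tau[OF assms(1)] assms by simp
  ultimately show ?thesis using Ublock_tau_nonzero[OF assms(1)] by simp
qed

lemma Ublock_00_nonzero: "Ublock 0 0 \<noteq> 0"
  using Spre_tau[of 1] Spre_tau_nonzero[of 1] k_pos by auto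

lemma Spre_mod_AV:
  assumes "i \<in> {1..k}"
  shows "(\<lambda>b. Spre i b - Spre i (BS (tau i)) * ebas (BS (tau i)) b) \<in> AV k"
  unfolding AV_eq[OF k_pos]
proof (intro CollectI conjI allI ballI impI)
  show "(\<lambda>b. Spre i b - Spre i (BS (tau i)) * ebas (BS (tau i)) b) \<in> Vsp k"
    using tau_in_range[OF assms] by (intro Vsp_diff Spre_in_Vsp[OF assms] ebas_in_Vsp) simp
  show "Spre i (BU j) - Spre i (BS (tau i)) * ebas (BS (tau i)) (BU j) = 0" if "j \<le> k" for j
    using Spre_U_coord[OF assms] that by simp
  show "Spre i (BS j) - Spre i (BS (tau i)) * ebas (BS (tau i)) (BS j) = 0" if "j \<in> {1..k}" for j
    using Spre_off_tau[OF assms that] by (cases "j = tau i") auto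
qed

lemma tau_bij: "bij_betw tau {1..k} {1..k}"
proof -
  have "{1..k} \<subseteq> tau ` {1..k}"
  proof
    fix t assume t: "t \<in> {1..k}"
    show "t \<in> tau ` {1..k}"
    proof (rule ccontr)
      assume off: "t \<notin> tau ` {1..k}"
      have "A (ebas (BU t)) (BU i) = 0" if "i \<le> k" for i
      proof (cases "i = 0")
        case True
        have "t \<noteq> tau 1" using off k_pos by auto
        then show ?thesis using Ublock_0_off_tau[of 1 t] k_pos t True unfolding Ublock_def by auto
      next
        case False
        then have "t \<noteq> tau i" using off that by auto
        then show ?thesis using Ublock_off_tau[of i t] that False t unfolding Ublock_def by auto
      qed
      then have "A (ebas (BU t)) \<in> ASV k eps"
        using t A_Vsp ebas_in_Vsp by (simp add: ASV_eq[OF k_pos])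
      then have "ebas (BU t) \<in> ASV k eps" using t ASV_of_A_ASV ebas_in_Vsp by simp
      then have "\<forall>i\<le>k. ebas (BU t) (BU i) = 0" by (simp add: ASV_eq[OF k_pos])
      moreover have "t \<le> k" using t by simp
      ultimately have "ebas (BU t) (BU t) = 0" by blast
      then show False by simp
    qed
  qed
  moreover have "tau ` {1..k} \<subseteq> {1..k}" using tau_in_range by auto
  ultimately have "tau ` {1..k} = {1..k}" by blast
  then show ?thesis by (simp add: bij_betw_def eq_card_imp_inj_on)
qed

lemma tau_eq_iff: "i \<in> {1..k} \<Longrightarrow> j \<in> {1..k} \<Longrightarrow> tau i = tau j \<longleftrightarrow> i = j"
  using tau_bij unfolding bij_betw_def inj_on_def by blast

lemma Ublock_0_eq_0:
  assumes "2 \<le> k" "r \<in> {1..k}"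
  shows "Ublock 0 r = 0"
proof -
  have "r \<in> tau ` {1..k}" using tau_bij assms(2) by (simp add: bij_betw_def)
  then obtain i where i: "i \<in> {1..k}" "tau i = r" by blast
  define i' where "i' = (if i = 1 then 2 else 1 :: nat)"
  have i': "i' \<in> {1..k}" "i' \<noteq> i" using assms(1) unfolding i'_def by auto
  then have "r \<noteq> tau i'" using tau_eq_iff[OF i'(1) i(1)] i(2) by simp
  then show ?thesis using Ublock_0_off_tau[OF i'(1) assms(2)] by simp
qed

lemma A_U0_S_coord:
  assumes "2 \<le> k" "j \<in> {1..k}"
  shows "A (ebas (BU 0)) (BS j) = 0"
proof -
  let ?x = "A (ebas (BU 0))" and ?y = "A (ebas (BU (tau j)))"
  have m: "tau j \<in> {1..k}" using tau_in_range[OF assms(2)] .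
  have x_U: "\<forall>i\<in>{1..k}. ?x (BU i) = 0"
    using Ublock_off_tau[of _ 0] tau_in_range unfolding Ublock_def by fastforce
  have y_U0: "?y (BU 0) = 0" using Ublock_0_eq_0[OF assms(1) m] unfolding Ublock_def .
  have y_U: "?y (BU i) = 0" if "i \<in> {1..k}" "i \<noteq> j" for i
    using Ublock_off_tau[OF that(1)] tau_eq_iff[OF assms(2) that(1)] that m
    unfolding Ublock_def by auto
  have "0 = Rt k (ebas (BU 0)) (ebas (BU (tau j))) (ebas (BU (tau j))) (ebas (BU 0))"
    using m by (subst Rt_xyyx) auto
  also have "\<dots> = Rt k ?x ?y ?y ?x" using A_Rt ebas_in_Vsp m by simp
  also have "\<dots> = 2 * Ublock 0 0 * (\<Sum>i\<in>{1..k}. (?y (BU i))\<^sup>2 * ?x (BS i))"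
    using Rt_xyyx[of k ?x ?y, OF x_U y_U0] by (simp add: Ublock_def)
  also have "\<dots> = 2 * Ublock 0 0 * ((Ublock j (tau j))\<^sup>2 * ?x (BS j))"
    using y_U assms(2) by (subst sum_eq_single[where m=j]) (auto simp: Ublock_def)
  finally show ?thesis using Ublock_00_nonzero Ublock_tau_nonzero[OF assms(2)] by simp
qed

lemma Spre_tau_eq_sgn:
  assumes eps: "\<forall>i\<in>{1..k}. eps i = 1 \<or> eps i = -1" and i: "i \<in> {1..k}"
  shows "Spre i (BS (tau i)) = sgn (Ublock 0 0)"
proof -
  define c where "c = Spre i (BS (tau i))"
  have m: "tau i \<in> {1..k}" by (rule tau_in_range[OF i])
  have "eps i = ip k eps (ebas (BS i)) (ebas (BS i))"
    using i by (subst ip_U_free) (auto simp: sum_eq_single[where m=i])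
  also have "\<dots> = ip k eps (Spre i) (Spre i)" using A_ip[OF Spre_in_Vsp[OF i] Spre_in_Vsp[OF i]] A_Spre[OF i] by simp
  also have "\<dots> = (\<Sum>j\<in>{1..k}. eps j * Spre i (BS j) * Spre i (BS j))"
    using Spre_U_coord[OF i] by (simp add: ip_U_free)
  also have "\<dots> = eps (tau i) * c\<^sup>2"
    using m Spre_off_tau[OF i]
    by (subst sum_eq_single[where m="tau i"]) (auto simp: c_def power2_eq_square)
  finally have "eps i = eps (tau i) * c\<^sup>2" .
  moreover have "eps i = 1 \<or> eps i = -1" "eps (tau i) = 1 \<or> eps (tau i) = -1"
    using eps i m by auto
  moreover have "c\<^sup>2 \<noteq> -1" using zero_le_power2[of c] by linarith
  ultimately have "c\<^sup>2 = 1" by auto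
  then have "c = sgn c" by (auto simp: power2_eq_1_iff)
  also have "sgn c = sgn (Ublock 0 0)"
  proof -
    have "sgn ((Ublock i (tau i))\<^sup>2) = 1" using Ublock_tau_nonzero[OF i] by (simp del: power_sgn)
    then show ?thesis by (simp add: c_def Spre_tau[OF i] sgn_mult del: power_sgn)
  qed
  finally show ?thesis unfolding c_def .
qed

lemma abs_Ublock_00_mult_square:
  assumes "\<forall>i\<in>{1..k}. eps i = 1 \<or> eps i = -1" "i \<in> {1..k}"
  shows "\<bar>Ublock 0 0\<bar> * (Ublock i (tau i))\<^sup>2 = 1"
proof -
  have "Ublock 0 0 * (Ublock i (tau i))\<^sup>2 = sgn (Ublock 0 0)"
    using Spre_tau_eq_sgn[OF assms] Spre_tau[OF assms(2)] by simp
  then have "\<bar>Ublock 0 0 * (Ublock i (tau i))\<^sup>2\<bar> = 1" using Ublock_00_nonzero by simp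
  then show ?thesis by (simp add: abs_mult)
qed

lemma A_U0_mod_AV:
  assumes "2 \<le> k"
  shows "(\<lambda>b. A (ebas (BU 0)) b - Ublock 0 0 * ebas (BU 0) b) \<in> AV k"
  unfolding AV_eq[OF k_pos]
proof (intro CollectI conjI allI ballI impI)
  show "(\<lambda>b. A (ebas (BU 0)) b - Ublock 0 0 * ebas (BU 0) b) \<in> Vsp k"
    by (intro Vsp_diff A_Vsp ebas_in_Vsp) simp_all
  show "A (ebas (BU 0)) (BU i) - Ublock 0 0 * ebas (BU 0) (BU i) = 0" if "i \<le> k" for i
  proof (cases "i = 0")
    case False
    then have "Ublock i 0 = 0" using Ublock_off_tau[of i 0] tau_in_range[of i] that by simp
    with False show ?thesis unfolding Ublock_def by simp
  qed (simp add: Ublock_def)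
  show "A (ebas (BU 0)) (BS j) - Ublock 0 0 * ebas (BU 0) (BS j) = 0" if "j \<in> {1..k}" for j
    using A_U0_S_coord[OF assms that] by simp
qed

lemma A_U_tau_mod_ASV:
  assumes "2 \<le> k" "i \<in> {1..k}"
  shows "(\<lambda>b. A (ebas (BU (tau i))) b - Ublock i (tau i) * ebas (BU i) b) \<in> ASV k eps"
  unfolding ASV_eq[OF k_pos]
proof (intro CollectI conjI allI impI)
  note m = tau_in_range[OF assms(2)]
  show "(\<lambda>b. A (ebas (BU (tau i))) b - Ublock i (tau i) * ebas (BU i) b) \<in> Vsp k"
    using m assms(2) by (intro Vsp_diff A_Vsp ebas_in_Vsp) simp_all
  fix j assume j: "j \<le> k"
  show "A (ebas (BU (tau i))) (BU j) - Ublock i (tau i) * ebas (BU i) (BU j) = 0"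
  proof (cases "j = 0")
    case True
    have "A (ebas (BU (tau i))) (BU 0) = 0" using Ublock_0_eq_0[OF assms(1) m] unfolding Ublock_def .
    then show ?thesis using True assms(2) by simp
  next
    case False
    then have "j \<in> {1..k}" using j by simp
    then have "j = i \<or> Ublock j (tau i) = 0"
      using Ublock_off_tau[of j "tau i"] tau_eq_iff[OF assms(2)] m by auto
    then show ?thesis unfolding Ublock_def by auto
  qed
qed

lemma A_S_tau_mod_AV:
  assumes "\<forall>i\<in>{1..k}. eps i = 1 \<or> eps i = -1" "i \<in> {1..k}"
  shows "(\<lambda>b. A (ebas (BS (tau i))) b - sgn (Ublock 0 0) * ebas (BS i) b) \<in> AV k"
proof -
  let ?c = "sgn (Ublock 0 0)"
  have S_tau: "ebas (BS (tau i)) \<in> Vsp k" using tau_in_range[OF assms(2)] by (simp add: ebas_in_Vsp)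
  have "A (\<lambda>b. Spre i b - ?c * ebas (BS (tau i)) b) \<in> AV k"
    using A_AV Spre_mod_AV[OF assms(2)] Spre_tau_eq_sgn[OF assms] by simp
  then have "(\<lambda>b. ebas (BS i) b - ?c * A (ebas (BS (tau i))) b) \<in> AV k"
    using A_diff[OF Spre_in_Vsp[OF assms(2)] S_tau] A_Spre[OF assms(2)] by simp
  then have "(\<lambda>b. - ?c * (ebas (BS i) b - ?c * A (ebas (BS (tau i))) b)) \<in> AV k"
    by (rule AV_scale[OF k_pos])
  moreover have "?c * ?c = 1" using Ublock_00_nonzero by (simp add: sgn_if)
  ultimately show ?thesis by (simp add: right_diff_distrib mult.assoc[symmetric])
qed

end

theorem theorem1p5:
  fixes k :: nat and eps :: "nat \<Rightarrow> real" and A :: "vec \<Rightarrow> vec"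
  assumes "k \<ge> 2"
    and "\<forall>i\<in>{1..k}. eps i = 1 \<or> eps i = -1"
    and "model_iso k eps A"
  shows "\<exists>\<sigma> :: nat \<Rightarrow> nat. \<exists>a0 :: real. \<exists>b :: nat \<Rightarrow> real.
           bij_betw \<sigma> {1..k} {1..k}
         \<and> (\<forall>i\<in>{1..k}. \<bar>a0\<bar> * (b i)\<^sup>2 = 1)
         \<and> (\<exists>\<xi>\<in>AV k. A (ebas (BU 0)) = (\<lambda>x. a0 * ebas (BU 0) x + \<xi> x))
         \<and> (\<forall>i\<in>{1..k}.
              (\<exists>\<xi>\<in>ASV k eps. A (ebas (BU i)) = (\<lambda>x. b i * ebas (BU (\<sigma> i)) x + \<xi> x))
            \<and> (\<exists>\<xi>\<in>AV k. A (ebas (BS i)) = (\<lambda>x. sgn a0 * ebas (BS (\<sigma> i)) x + \<xi> x)))"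
proof -
  interpret model_isomorphism k eps A
    using assms by unfold_locales simp_all
  define \<sigma> where "\<sigma> = inv_into {1..k} tau"
  have \<sigma>_bij: "bij_betw \<sigma> {1..k} {1..k}" unfolding \<sigma>_def by (rule bij_betw_inv_into[OF tau_bij])
  have \<sigma>: "\<sigma> p \<in> {1..k}" "tau (\<sigma> p) = p" if "p \<in> {1..k}" for p
    using bij_betwE[OF \<sigma>_bij] bij_betw_inv_into_right[OF tau_bij] that unfolding \<sigma>_def by auto
  show ?thesis
  proof (intro exI[of _ \<sigma>] exI[of _ "Ublock 0 0"] exI[of _ "\<lambda>p. Ublock (\<sigma> p) p"] conjI ballI)
    show "bij_betw \<sigma> {1..k} {1..k}" by (fact \<sigma>_bij)
    show "\<exists>\<xi>\<in>AV k. A (ebas (BU 0)) = (\<lambda>x. Ublock 0 0 * ebas (BU 0) x + \<xi> x)"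
      by (rule bex_offset[OF A_U0_mod_AV[OF assms(1)]])
    fix p assume p: "p \<in> {1..k}"
    show "\<bar>Ublock 0 0\<bar> * (Ublock (\<sigma> p) p)\<^sup>2 = 1"
      using abs_Ublock_00_mult_square[OF assms(2) \<sigma>(1)[OF p]] \<sigma>(2)[OF p] by simp
    show "\<exists>\<xi>\<in>ASV k eps. A (ebas (BU p)) = (\<lambda>x. Ublock (\<sigma> p) p * ebas (BU (\<sigma> p)) x + \<xi> x)"
      using bex_offset[OF A_U_tau_mod_ASV[OF assms(1) \<sigma>(1)[OF p]]] \<sigma>(2)[OF p] by simp
    show "\<exists>\<xi>\<in>AV k. A (ebas (BS p)) = (\<lambda>x. sgn (Ublock 0 0) * ebas (BS (\<sigma> p)) x + \<xi> x)"
      using bex_offset[OF A_S_tau_mod_AV[OF assms(2) \<sigma>(1)[OF p]]] \<sigma>(2)[OF p] by simp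
  qed
qed

end
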